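(* Let $\mathcal O\subset\mathbb R^n$ be open and $g:\mathbb R^n\to\mathbb R$ positive. Let $w$ be a solution and $z$ a strict subsolution to the free boundary problem associated with $g$ in $\mathcal O$ (as defined in the context), with $w,z\in C(\overline{\mathcal O})$. If $w\ge z$ in $\overline{\mathcal O}$, then $w>z$ in $\mathcal O$. The analogous statement holds for strict supersolutions (with the inequalities reversed).
   Context: For a function $f$, $f^+:=|f|\chi_{\{f>0\}}$ and $f^-:=|f|\chi_{\{f<0\}}$. A solution to the free boundary problem associated to $g$ in $\mathcal O$ is a continuous $w$ with $w\in C^2(\{w>0\})\cap C^2(\{w<0\})$, $w\in C^1(\overline{\{w>0\}})\cap C^1(\overline{\{w<0\}})$, $\Delta w=0$ on $\{w\ne0\}\cap\mathcal O$, and $g(x)(w^+)_{\nu_x}(x)=-(w^-)_{\nu_x}(x)$ for $x\in\{w=0\}\cap\mathcal O$, where $\nu_x$ is the unit normal to $\{w=0\}$ at $x$ pointing into $\{w>0\}$. A strict subsolution to the free boundary problem associated with $g$ in $\mathcal O$ is $z\in C(\overline{\mathcal O})$ such that: $\{z=0\}$ is locally the graph of a $C^2$ function; $z\in C^1(\overline{\{z>0\}\cap\mathcal O})\cap C^1(\overline{\{z<0\}\cap\mathcal O})$; $\Delta z>0$ on $\{z\neq0\}$; and for $x_0\in\{z=0\}$, $g(x_0)(z^+)_{\nu_{x_0}}(x_0)+(z^-)_{\nu_{x_0}}(x_0)>0$, where $\nu_{x_0}$ is the inward unit normal at $x_0$ to $\{z>0\}$. A strict supersolution is defined analogously with the inequalities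 reversed ($\Delta z<0$ and the boundary quantity $<0$). *)

theory Defs
  imports "HOL-Analysis.Analysis"
begin

definition pos_part :: "('a \<Rightarrow> real) \<Rightarrow> 'a \<Rightarrow> real" where
  "pos_part f x = (if f x > 0 then \<bar>f x\<bar> else 0)"

definition neg_part :: "('a \<Rightarrow> real) \<Rightarrow> 'a \<Rightarrow> real" where
  "neg_part f x = (if f x < 0 then \<bar>f x\<bar> else 0)"

definition C2_on :: "('a::euclidean_space \<Rightarrow> real) \<Rightarrow> 'a set \<Rightarrow> bool" where
  "C2_on f U \<longleftrightarrow> open U \<and>
     (\<forall>x\<in>U. f differentiable (at x)) \<and>
     (\<forall>x\<in>U. \<forall>v. (\<lambda>y. frechet_derivative f (at y) v) differentiable (at x)) \<and>
     (\<forall>v w. continuous_on U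
        (\<lambda>x. frechet_derivative (\<lambda>y. frechet_derivative f (at y) v) (at x) w))"

definition laplacian :: "('a::euclidean_space \<Rightarrow> real) \<Rightarrow> 'a \<Rightarrow> real" where
  "laplacian f x = (\<Sum>b\<in>Basis. frechet_derivative (\<lambda>y. frechet_derivative f (at y) b) (at x) b)"

definition C1_closure :: "('a::euclidean_space \<Rightarrow> real) \<Rightarrow> 'a set \<Rightarrow> bool" where
  "C1_closure f U \<longleftrightarrow> continuous_on (closure U) f \<and>
     (\<exists>G. continuous_on (closure U) G \<and> (\<forall>x\<in>U. (f has_derivative (\<lambda>h. G x \<bullet> h)) (at x)))"

text \<open>Derivative of f in direction \<nu> at a point x of the closure of U, computed from the
  side U (via the continuous extension of the gradient of f from U).\<close>
definition side_deriv :: "('a::euclidean_space \<Rightarrow> real) \<Rightarrow> 'a set \<Rightarrow> 'a \<Rightarrow> 'a \<Rightarrow> real" where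
  "side_deriv f U x \<nu> = (THE d. \<exists>G. continuous_on (closure U) G \<and>
     (\<forall>y\<in>U. (f has_derivative (\<lambda>h. G y \<bullet> h)) (at y)) \<and> d = G x \<bullet> \<nu>)"

text \<open>\<nu> is the unit normal at x to the zero set {f = 0}, pointing into {f > 0}:
  near x, points in the open cone around \<nu> lie in {f > 0} and points in the open cone
  around -\<nu> lie in {f < 0} (for every aperture, on a sufficiently small ball).\<close>
definition fb_normal :: "('a::euclidean_space \<Rightarrow> real) \<Rightarrow> 'a \<Rightarrow> 'a \<Rightarrow> bool" where
  "fb_normal f x \<nu> \<longleftrightarrow> norm \<nu> = 1 \<and>
     (\<forall>\<epsilon>>0. \<exists>\<delta>>0. \<forall>y\<in>ball x \<delta>.
        ((y - x) \<bullet> \<nu> > \<epsilon> * norm (y - x) \<longrightarrow> f y > 0) \<and>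
        ((y - x) \<bullet> \<nu> < - \<epsilon> * norm (y - x) \<longrightarrow> f y < 0))"

definition fb_solution :: "('a::euclidean_space \<Rightarrow> real) \<Rightarrow> 'a set \<Rightarrow> ('a \<Rightarrow> real) \<Rightarrow> bool" where
  "fb_solution g \<Omega> w \<longleftrightarrow>
     continuous_on \<Omega> w \<and>
     C2_on w {x\<in>\<Omega>. w x > 0} \<and> C2_on w {x\<in>\<Omega>. w x < 0} \<and>
     C1_closure w {x\<in>\<Omega>. w x > 0} \<and> C1_closure w {x\<in>\<Omega>. w x < 0} \<and>
     (\<forall>x\<in>\<Omega>. w x \<noteq> 0 \<longrightarrow> laplacian w x = 0) \<and>
     (\<forall>x\<in>\<Omega>. w x = 0 \<longrightarrow> (\<exists>\<nu>. fb_normal w x \<nu>) \<and>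
        (\<forall>\<nu>. fb_normal w x \<nu> \<longrightarrow>
           g x * side_deriv (pos_part w) {y\<in>\<Omega>. w y > 0} x \<nu>
             = - side_deriv (neg_part w) {y\<in>\<Omega>. w y < 0} x \<nu>))"

text \<open>{z = 0} is locally (near each of its points in \<Omega>) the graph of a C^2 function over a
  hyperplane e-perp (e a unit vector); phi is C^2 on the whole space, which is no loss.\<close>
definition locally_C2_graph :: "('a::euclidean_space \<Rightarrow> real) \<Rightarrow> 'a set \<Rightarrow> bool" where
  "locally_C2_graph z \<Omega> \<longleftrightarrow> (\<forall>x\<in>\<Omega>. z x = 0 \<longrightarrow>
     (\<exists>r>0. \<exists>e \<phi>. norm e = 1 \<and> C2_on \<phi> UNIV \<and>
        (\<forall>y\<in>ball x r. z y = 0 \<longleftrightarrow> y \<bullet> e = \<phi> (y - (y \<bullet> e) *\<^sub>R e))))"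

definition strict_subsolution :: "('a::euclidean_space \<Rightarrow> real) \<Rightarrow> 'a set \<Rightarrow> ('a \<Rightarrow> real) \<Rightarrow> bool" where
  "strict_subsolution g \<Omega> z \<longleftrightarrow>
     continuous_on (closure \<Omega>) z \<and> locally_C2_graph z \<Omega> \<and>
     C1_closure z {x\<in>\<Omega>. z x > 0} \<and> C1_closure z {x\<in>\<Omega>. z x < 0} \<and>
     C2_on z {x\<in>\<Omega>. z x > 0} \<and> C2_on z {x\<in>\<Omega>. z x < 0} \<and>
     (\<forall>x\<in>\<Omega>. z x \<noteq> 0 \<longrightarrow> laplacian z x > 0) \<and>
     (\<forall>x\<in>\<Omega>. z x = 0 \<longrightarrow> (\<exists>\<nu>. fb_normal z x \<nu>) \<and>
        (\<forall>\<nu>. fb_normal z x \<nu> \<longrightarrow>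
           g x * side_deriv (pos_part z) {y\<in>\<Omega>. z y > 0} x \<nu>
             + side_deriv (neg_part z) {y\<in>\<Omega>. z y < 0} x \<nu> > 0))"

definition strict_supersolution :: "('a::euclidean_space \<Rightarrow> real) \<Rightarrow> 'a set \<Rightarrow> ('a \<Rightarrow> real) \<Rightarrow> bool" where
  "strict_supersolution g \<Omega> z \<longleftrightarrow>
     continuous_on (closure \<Omega>) z \<and> locally_C2_graph z \<Omega> \<and>
     C1_closure z {x\<in>\<Omega>. z x > 0} \<and> C1_closure z {x\<in>\<Omega>. z x < 0} \<and>
     C2_on z {x\<in>\<Omega>. z x > 0} \<and> C2_on z {x\<in>\<Omega>. z x < 0} \<and>
     (\<forall>x\<in>\<Omega>. z x \<noteq> 0 \<longrightarrow> laplacian z x < 0) \<and>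
     (\<forall>x\<in>\<Omega>. z x = 0 \<longrightarrow> (\<exists>\<nu>. fb_normal z x \<nu>) \<and>
        (\<forall>\<nu>. fb_normal z x \<nu> \<longrightarrow>
           g x * side_deriv (pos_part z) {y\<in>\<Omega>. z y > 0} x \<nu>
             + side_deriv (neg_part z) {y\<in>\<Omega>. z y < 0} x \<nu> < 0))"

end

theory Submission
  imports Defs
begin

text \<open>Suppose z \<le> w touch at x \<in> \<Omega>. If z x = w x \<noteq> 0, both functions are twice differentiable near x and w - z
  has a local minimum there, so every second directional derivative, hence the Laplacian, of z is
  at most that of w; this contradicts \<Delta>z > 0 = \<Delta>w. If z x = w x = 0, the free boundaries touch
  at x. Since z \<le> w, the positive cone of z around its normal cannot meet the negative cone of w
  around its normal, so the normals coincide; comparing the one-sided difference quotients of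
  the positive parts along \<nu> and of the negative parts along -\<nu> then orders the normal derivatives, and the
  strict free boundary inequality for z contradicts the free boundary condition for w.\<close>

lemma local_min_imp_second_deriv_nonneg:
  fixes \<phi> \<psi> :: "real \<Rightarrow> real"
  assumes r: "r > 0"
    and min: "\<And>t. \<bar>t - a\<bar> < r \<Longrightarrow> \<phi> a \<le> \<phi> t"
    and \<phi>': "\<And>t. \<bar>t - a\<bar> < r \<Longrightarrow> (\<phi> has_real_derivative \<psi> t) (at t)"
    and \<psi>': "(\<psi> has_real_derivative c) (at a)"
  shows "c \<ge> 0"
proof (rule ccontr)
  assume "\<not> c \<ge> 0"
  then obtain d where d: "d > 0" "\<And>h. 0 < h \<Longrightarrow> h < d \<Longrightarrow> \<psi> (a + h) < \<psi> a"
    using DERIV_neg_dec_right[OF \<psi>'] by force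
  have "(\<phi> has_real_derivative \<psi> a) (at a)" using \<phi>' r by simp
  then have "\<psi> a = 0"
    by (rule DERIV_local_min[OF _ r]) (use min in \<open>auto simp: abs_minus_commute\<close>)
  define h where "h = min d r / 2"
  have h: "0 < h" "h < d" "h < r" using d r by (auto simp: h_def)
  obtain \<xi> where \<xi>: "a < \<xi>" "\<xi> < a + h" "\<phi> (a + h) - \<phi> a = h * \<psi> \<xi>"
    using MVT2[of a "a + h" \<phi> \<psi>] \<phi>' h by force
  have "\<psi> \<xi> < 0"
    using d(2)[of "\<xi> - a"] \<xi> h \<open>\<psi> a = 0\<close> by simp
  then have "\<phi> (a + h) < \<phi> a" using \<xi>(3) mult_pos_neg[OF h(1) \<open>\<psi> \<xi> < 0\<close>] by linarith
  with min[of "a + h"] h show False by simp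
qed

lemma has_real_derivative_along_line:
  fixes f :: "'a::real_normed_vector \<Rightarrow> real"
  assumes "(f has_derivative D) (at (x + t *\<^sub>R b))"
  shows "((\<lambda>s. f (x + s *\<^sub>R b)) has_real_derivative D b) (at t)"
proof -
  have "((\<lambda>s. x + s *\<^sub>R b) has_derivative (\<lambda>s. s *\<^sub>R b)) (at t)"
    by (auto intro!: derivative_eq_intros)
  from has_derivative_compose[OF this assms]
  have "((\<lambda>s. f (x + s *\<^sub>R b)) has_derivative (\<lambda>s. D (s *\<^sub>R b))) (at t)" .
  moreover have "(\<lambda>s. D (s *\<^sub>R b)) = (*) (D b)"
    using has_derivative_linear[OF assms] by (simp add: linear_cmul fun_eq_iff mult.commute)
  ultimately show ?thesis
    unfolding has_field_derivative_def by simp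
qed

lemma open_contains_line_segment:
  fixes x :: "'a::real_normed_vector"
  assumes "open V" "x \<in> V"
  obtains r where "r > 0" "\<And>t. \<bar>t\<bar> < r \<Longrightarrow> x + t *\<^sub>R b \<in> V"
proof -
  have "((\<lambda>t. x + t *\<^sub>R b) \<longlongrightarrow> x) (nhds 0)"
    by (auto intro!: tendsto_eq_intros filterlim_ident)
  then have "\<forall>\<^sub>F t in nhds 0. x + t *\<^sub>R b \<in> V"
    using assms by (rule topological_tendstoD)
  then show ?thesis
    using that unfolding eventually_nhds_metric dist_real_def by auto
qed

lemma second_directional_derivative_mono:
  fixes f1 f2 :: "'a::euclidean_space \<Rightarrow> real"
  assumes V: "open V" "x \<in> V"
    and d1: "\<And>y. y \<in> V \<Longrightarrow> f1 differentiable (at y)"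
    and d2: "\<And>y. y \<in> V \<Longrightarrow> f2 differentiable (at y)"
    and dd1: "(\<lambda>y. frechet_derivative f1 (at y) b) differentiable (at x)"
    and dd2: "(\<lambda>y. frechet_derivative f2 (at y) b) differentiable (at x)"
    and le: "\<And>y. y \<in> V \<Longrightarrow> f1 y \<le> f2 y" and eq: "f1 x = f2 x"
  shows "frechet_derivative (\<lambda>y. frechet_derivative f1 (at y) b) (at x) b
       \<le> frechet_derivative (\<lambda>y. frechet_derivative f2 (at y) b) (at x) b"
proof -
  define D1 where "D1 y = frechet_derivative f1 (at y) b" for y
  define D2 where "D2 y = frechet_derivative f2 (at y) b" for y
  obtain r where r: "r > 0" "\<And>t. \<bar>t\<bar> < r \<Longrightarrow> x + t *\<^sub>R b \<in> V"
    using open_contains_line_segment[OF V] by blast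
  have "(D1 has_derivative frechet_derivative D1 (at x)) (at x)"
    "(D2 has_derivative frechet_derivative D2 (at x)) (at x)"
    using dd1 dd2 frechet_derivative_works unfolding D1_def[abs_def] D2_def[abs_def] by blast+
  then have D1': "((\<lambda>t. D1 (x + t *\<^sub>R b)) has_real_derivative frechet_derivative D1 (at x) b) (at 0)"
    and D2': "((\<lambda>t. D2 (x + t *\<^sub>R b)) has_real_derivative frechet_derivative D2 (at x) b) (at 0)"
    by (auto intro: has_real_derivative_along_line)
  have "frechet_derivative D2 (at x) b - frechet_derivative D1 (at x) b \<ge> 0"
  proof (rule local_min_imp_second_deriv_nonneg[OF r(1), where a = 0])
    show "(\<lambda>t. f2 (x + t *\<^sub>R b) - f1 (x + t *\<^sub>R b)) 0 \<le> f2 (x + t *\<^sub>R b) - f1 (x + t *\<^sub>R b)"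
      if "\<bar>t - 0\<bar> < r" for t
      using le r(2) that eq by simp
    show "((\<lambda>t. f2 (x + t *\<^sub>R b) - f1 (x + t *\<^sub>R b)) has_real_derivative
        D2 (x + t *\<^sub>R b) - D1 (x + t *\<^sub>R b)) (at t)" if "\<bar>t - 0\<bar> < r" for t
      unfolding D1_def D2_def
      using that r(2) d1 d2
      by (intro DERIV_diff has_real_derivative_along_line frechet_derivative_works[THEN iffD1]) auto
  qed (rule DERIV_diff[OF D2' D1'])
  then show ?thesis unfolding D1_def D2_def by simp
qed

lemma laplacian_mono_at_touching:
  fixes f1 f2 :: "'a::euclidean_space \<Rightarrow> real"
  assumes A: "C2_on f1 A" and B: "C2_on f2 B" and x: "x \<in> A" "x \<in> B"
    and le: "\<And>y. y \<in> A \<inter> B \<Longrightarrow> f1 y \<le> f2 y" and eq: "f1 x = f2 x"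
  shows "laplacian f1 x \<le> laplacian f2 x"
  unfolding laplacian_def
proof (rule sum_mono)
  fix b :: 'a
  show "frechet_derivative (\<lambda>y. frechet_derivative f1 (at y) b) (at x) b
      \<le> frechet_derivative (\<lambda>y. frechet_derivative f2 (at y) b) (at x) b"
    by (rule second_directional_derivative_mono[of "A \<inter> B"])
      (use A B x le eq in \<open>auto simp: C2_on_def\<close>)
qed

lemma fb_normal_rays:
  fixes f :: "'a::euclidean_space \<Rightarrow> real"
  assumes "fb_normal f x \<nu>"
  shows "\<exists>\<delta>>0. \<forall>s. 0 < s \<and> s < \<delta> \<longrightarrow> f (x + s *\<^sub>R \<nu>) > 0 \<and> f (x - s *\<^sub>R \<nu>) < 0"
proof -
  have n: "norm \<nu> = 1" and "\<nu> \<bullet> \<nu> = 1"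
    using assms by (auto simp: fb_normal_def dot_square_norm)
  obtain \<delta> where "\<delta> > 0" and \<delta>: "\<forall>y\<in>ball x \<delta>.
      ((y - x) \<bullet> \<nu> > 1/2 * norm (y - x) \<longrightarrow> f y > 0) \<and>
      ((y - x) \<bullet> \<nu> < - (1/2) * norm (y - x) \<longrightarrow> f y < 0)"
    using conjunct2[OF assms[unfolded fb_normal_def], rule_format, of "1/2"] by auto
  have "f (x + s *\<^sub>R \<nu>) > 0 \<and> f (x - s *\<^sub>R \<nu>) < 0" if "0 < s" "s < \<delta>" for s
  proof -
    have "x + s *\<^sub>R \<nu> \<in> ball x \<delta>" "x - s *\<^sub>R \<nu> \<in> ball x \<delta>"
      using that n by (auto simp: dist_norm)
    then show ?thesis
      using \<delta> \<open>0 < s\<close> n \<open>\<nu> \<bullet> \<nu> = 1\<close> by auto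
  qed
  then show ?thesis
    using \<open>\<delta> > 0\<close> by blast
qed

text \<open>At a common zero of f1 \<le> f2 the normals must agree: otherwise a point slightly beyond
  x in direction \<nu>1 - \<nu>2 lies in the positive cone of f1 and the negative cone of f2.\<close>
lemma fb_normal_unique_of_le:
  fixes f1 f2 :: "'a::euclidean_space \<Rightarrow> real"
  assumes n1: "fb_normal f1 x \<nu>1" and n2: "fb_normal f2 x \<nu>2" and r: "r > 0"
    and le: "\<And>y. y \<in> ball x r \<Longrightarrow> f1 y \<le> f2 y"
  shows "\<nu>1 = \<nu>2"
proof (rule ccontr)
  assume "\<nu>1 \<noteq> \<nu>2"
  define d where "d = \<nu>1 - \<nu>2"
  define m where "m = norm d"
  have m: "m > 0" using \<open>\<nu>1 \<noteq> \<nu>2\<close> by (simp add: m_def d_def)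
  have u1: "\<nu>1 \<bullet> \<nu>1 = 1" and u2: "\<nu>2 \<bullet> \<nu>2 = 1"
    using n1 n2 unfolding fb_normal_def by (auto simp: dot_square_norm)
  have "m\<^sup>2 = 2 - 2 * (\<nu>1 \<bullet> \<nu>2)"
    unfolding m_def d_def power2_norm_eq_inner
    by (simp add: inner_diff_left inner_diff_right u1 u2 inner_commute)
  then have "\<nu>1 \<bullet> \<nu>2 = 1 - m\<^sup>2 / 2" by linarith
  then have dv1: "d \<bullet> \<nu>1 = m\<^sup>2 / 2" and dv2: "d \<bullet> \<nu>2 = - (m\<^sup>2 / 2)"
    using u1 u2 by (auto simp: d_def inner_diff_left inner_commute[of \<nu>2 \<nu>1])
  obtain \<delta>1 where "\<delta>1 > 0" and \<delta>1: "\<forall>y\<in>ball x \<delta>1. (y - x) \<bullet> \<nu>1 > m / 4 * norm (y - x) \<longrightarrow> f1 y > 0"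
    using conjunct2[OF n1[unfolded fb_normal_def], rule_format, of "m/4"] m by auto
  obtain \<delta>2 where "\<delta>2 > 0" and \<delta>2: "\<forall>y\<in>ball x \<delta>2. (y - x) \<bullet> \<nu>2 < - (m / 4) * norm (y - x) \<longrightarrow> f2 y < 0"
    using conjunct2[OF n2[unfolded fb_normal_def], rule_format, of "m/4"] m by auto
  define t where "t = min r (min \<delta>1 \<delta>2) / (2 * m)"
  have t: "t > 0" using \<open>\<delta>1 > 0\<close> \<open>\<delta>2 > 0\<close> r m by (simp add: t_def)
  define y where "y = x + t *\<^sub>R d"
  have ny: "norm (y - x) = t * m" using t by (simp add: y_def m_def)
  have "t * m = min r (min \<delta>1 \<delta>2) / 2" using m by (simp add: t_def)
  then have y: "y \<in> ball x r" "y \<in> ball x \<delta>1" "y \<in> ball x \<delta>2"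
    using ny \<open>\<delta>1 > 0\<close> \<open>\<delta>2 > 0\<close> r by (auto simp: dist_norm norm_minus_commute)
  have small: "m / 4 * norm (y - x) < t * (m\<^sup>2 / 2)"
    using t m by (simp add: ny power2_eq_square)
  have "(y - x) \<bullet> \<nu>1 = t * (m\<^sup>2 / 2)" "(y - x) \<bullet> \<nu>2 = - (t * (m\<^sup>2 / 2))"
    using dv1 dv2 by (simp_all add: y_def)
  then have "f1 y > 0" "f2 y < 0"
    using \<delta>1[rule_format, OF y(2)] \<delta>2[rule_format, OF y(3)] small by linarith+
  with le[OF y(1)] show False by simp
qed

lemma tendsto_difference_quotient_gradient:
  fixes f :: "'a::euclidean_space \<Rightarrow> real"
  assumes cont: "continuous_on (closure U) f"
    and G: "continuous_on (closure U) G" and der: "\<And>y. y \<in> U \<Longrightarrow> (f has_derivative (\<lambda>h. G y \<bullet> h)) (at y)"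
    and f0: "f x = 0" and \<delta>: "\<delta> > 0" and ray: "\<And>s. 0 < s \<Longrightarrow> s < \<delta> \<Longrightarrow> x + s *\<^sub>R d \<in> U"
  shows "((\<lambda>t. f (x + t *\<^sub>R d) / t) \<longlongrightarrow> G x \<bullet> d) (at_right 0)"
proof -
  have ray_ev: "\<forall>\<^sub>F s in at_right 0. x + s *\<^sub>R d \<in> U"
    unfolding eventually_at_right_field using \<delta> ray by blast
  have "((\<lambda>s. x + s *\<^sub>R d) \<longlongrightarrow> x) (at_right 0)"
    by (auto intro!: tendsto_eq_intros)
  then have x: "x \<in> closure U"
    using ray_ev by (intro Lim_in_closed_set[of _ "\<lambda>s. x + s *\<^sub>R d" "at_right 0"])
      (auto elim: eventually_mono intro: closure_subset[THEN subsetD])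
  have "\<exists>\<xi>. 0 < \<xi> \<and> \<xi> < t \<and> f (x + t *\<^sub>R d) / t = G (x + \<xi> *\<^sub>R d) \<bullet> d"
    if t: "0 < t" "t < \<delta>" for t
  proof -
    have "x + s *\<^sub>R d \<in> closure U" if "s \<in> {0..t}" for s
      using that t x by (cases "s = 0") (auto intro!: closure_subset[THEN subsetD] ray)
    moreover have "continuous_on {0..t} (\<lambda>s. x + s *\<^sub>R d)"
      by (intro continuous_intros)
    ultimately have "continuous_on {0..t} (\<lambda>s. f (x + s *\<^sub>R d))"
      using continuous_on_compose2[OF cont] by blast
    moreover have "((\<lambda>s. f (x + s *\<^sub>R d)) has_real_derivative G (x + s *\<^sub>R d) \<bullet> d) (at s)"
      if "0 < s" "s < t" for s
      using that t by (intro has_real_derivative_along_line der ray) auto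
    ultimately obtain \<xi> where "0 < \<xi>" "\<xi> < t"
      "f (x + t *\<^sub>R d) - f (x + 0 *\<^sub>R d) = G (x + \<xi> *\<^sub>R d) \<bullet> d * (t - 0)"
      using mvt[OF t(1), of "\<lambda>s. f (x + s *\<^sub>R d)" "\<lambda>s. (*) (G (x + s *\<^sub>R d) \<bullet> d)"]
      unfolding has_field_derivative_def by blast
    then show ?thesis using t f0 by auto
  qed
  then obtain \<xi> where \<xi>: "\<And>t. 0 < t \<Longrightarrow> t < \<delta> \<Longrightarrow> 0 < \<xi> t \<and> \<xi> t < t \<and> f (x + t *\<^sub>R d) / t = G (x + \<xi> t *\<^sub>R d) \<bullet> d"
    by metis
  have ev: "\<forall>\<^sub>F t in at_right 0. t < \<delta> \<and> 0 < \<xi> t \<and> \<xi> t < t \<and> f (x + t *\<^sub>R d) / t = G (x + \<xi> t *\<^sub>R d) \<bullet> d"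
    unfolding eventually_at_right_field using \<delta> \<xi> by blast
  have "(\<xi> \<longlongrightarrow> 0) (at_right 0)"
    by (rule tendsto_sandwich[of "\<lambda>_. 0" _ _ "\<lambda>t. t"]) (use ev in \<open>auto elim: eventually_mono\<close>)
  then have "((\<lambda>t. x + \<xi> t *\<^sub>R d) \<longlongrightarrow> x) (at_right 0)"
    by (auto intro!: tendsto_eq_intros)
  moreover have "\<forall>\<^sub>F t in at_right 0. x + \<xi> t *\<^sub>R d \<in> closure U"
    using ev by eventually_elim (auto intro!: closure_subset[THEN subsetD] ray)
  ultimately have "((\<lambda>t. G (x + \<xi> t *\<^sub>R d) \<bullet> d) \<longlongrightarrow> G x \<bullet> d) (at_right 0)"
    by (intro tendsto_inner continuous_on_tendsto_compose[OF G] x tendsto_const)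
  then show ?thesis
    by (rule Lim_transform_eventually) (use ev in \<open>auto elim: eventually_mono\<close>)
qed

lemma side_deriv_eqI:
  fixes f :: "'a::euclidean_space \<Rightarrow> real"
  assumes G0: "continuous_on (closure U) G0" "\<forall>y\<in>U. (f has_derivative (\<lambda>h. G0 y \<bullet> h)) (at y)"
    and unique: "\<And>G. continuous_on (closure U) G \<Longrightarrow> \<forall>y\<in>U. (f has_derivative (\<lambda>h. G y \<bullet> h)) (at y)
      \<Longrightarrow> G x \<bullet> v = G0 x \<bullet> v"
  shows "side_deriv f U x v = G0 x \<bullet> v"
  unfolding side_deriv_def
proof (rule the_equality)
  show "\<exists>G. continuous_on (closure U) G \<and> (\<forall>y\<in>U. (f has_derivative (\<lambda>h. G y \<bullet> h)) (at y))
      \<and> G0 x \<bullet> v = G x \<bullet> v"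
    using G0 by blast
next
  fix e assume "\<exists>G. continuous_on (closure U) G \<and> (\<forall>y\<in>U. (f has_derivative (\<lambda>h. G y \<bullet> h)) (at y))
      \<and> e = G x \<bullet> v"
  then obtain G where "continuous_on (closure U) G" "\<forall>y\<in>U. (f has_derivative (\<lambda>h. G y \<bullet> h)) (at y)"
    and "e = G x \<bullet> v"
    by blast
  then show "e = G0 x \<bullet> v"
    using unique by simp
qed

lemma tendsto_side_deriv:
  fixes f :: "'a::euclidean_space \<Rightarrow> real"
  assumes C1: "C1_closure f U" and f0: "f x = 0"
    and \<delta>: "\<delta> > 0" and ray: "\<And>s. 0 < s \<Longrightarrow> s < \<delta> \<Longrightarrow> x + s *\<^sub>R d \<in> U"
  shows "((\<lambda>t. f (x + t *\<^sub>R d) / t) \<longlongrightarrow> side_deriv f U x d) (at_right 0)"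
    and "side_deriv f U x (- d) = - side_deriv f U x d"
proof -
  have cont: "continuous_on (closure U) f"
    using C1 by (simp add: C1_closure_def)
  obtain G0 where G0: "continuous_on (closure U) G0" "\<forall>y\<in>U. (f has_derivative (\<lambda>h. G0 y \<bullet> h)) (at y)"
    using C1 unfolding C1_closure_def by blast
  have lim: "((\<lambda>t. f (x + t *\<^sub>R d) / t) \<longlongrightarrow> G x \<bullet> d) (at_right 0)"
    if "continuous_on (closure U) G" "\<forall>y\<in>U. (f has_derivative (\<lambda>h. G y \<bullet> h)) (at y)" for G
    by (rule tendsto_difference_quotient_gradient[OF cont that(1) _ f0 \<delta> ray]) (use that(2) in blast)
  text \<open>The gradient extension G need not be unique on the boundary, but G x \<bullet> d is.\<close>
  have unique: "G x \<bullet> d = G0 x \<bullet> d"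
    if "continuous_on (closure U) G" "\<forall>y\<in>U. (f has_derivative (\<lambda>h. G y \<bullet> h)) (at y)" for G
    using tendsto_unique[OF trivial_limit_at_right_real lim[OF that] lim[OF G0]] .
  have "side_deriv f U x d = G0 x \<bullet> d"
    by (rule side_deriv_eqI[OF G0]) (rule unique)
  moreover have "side_deriv f U x (- d) = G0 x \<bullet> - d"
    by (rule side_deriv_eqI[OF G0]) (simp add: unique)
  ultimately show "((\<lambda>t. f (x + t *\<^sub>R d) / t) \<longlongrightarrow> side_deriv f U x d) (at_right 0)"
    and "side_deriv f U x (- d) = - side_deriv f U x d"
    using lim[OF G0] by simp_all
qed

lemma C1_closure_pos_part:
  fixes f :: "'a::euclidean_space \<Rightarrow> real"
  assumes "open U" and pos: "\<And>y. y \<in> U \<Longrightarrow> f y > 0" and C1: "C1_closure f U"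
  shows "C1_closure (pos_part f) U"
proof -
  obtain G where G: "continuous_on (closure U) G" "\<forall>y\<in>U. (f has_derivative (\<lambda>h. G y \<bullet> h)) (at y)"
    using C1 unfolding C1_closure_def by blast
  have "continuous_on (closure U) f"
    using C1 by (simp add: C1_closure_def)
  then have "continuous_on (closure U) (\<lambda>y. max (f y) 0)"
    by (intro continuous_on_max continuous_on_const)
  moreover have "pos_part f = (\<lambda>y. max (f y) 0)"
    by (simp add: pos_part_def fun_eq_iff)
  moreover have "(pos_part f has_derivative (\<lambda>h. G y \<bullet> h)) (at y)" if "y \<in> U" for y
    by (rule has_derivative_transform_within_open[OF G(2)[rule_format, OF that] \<open>open U\<close> that])
      (simp add: pos pos_part_def abs_of_pos)
  ultimately show ?thesis
    using G(1) unfolding C1_closure_def by metis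
qed

lemma C1_closure_neg_part:
  fixes f :: "'a::euclidean_space \<Rightarrow> real"
  assumes "open U" and neg: "\<And>y. y \<in> U \<Longrightarrow> f y < 0" and C1: "C1_closure f U"
  shows "C1_closure (neg_part f) U"
proof -
  obtain G where G: "continuous_on (closure U) G" "\<forall>y\<in>U. (f has_derivative (\<lambda>h. G y \<bullet> h)) (at y)"
    using C1 unfolding C1_closure_def by blast
  have "continuous_on (closure U) f"
    using C1 by (simp add: C1_closure_def)
  then have "continuous_on (closure U) (\<lambda>y. max (- f y) 0)"
    by (intro continuous_on_max continuous_on_minus continuous_on_const)
  moreover have "neg_part f = (\<lambda>y. max (- f y) 0)"
    by (simp add: neg_part_def fun_eq_iff)
  moreover have "continuous_on (closure U) (\<lambda>y. - G y)"
    using G(1) by (rule continuous_on_minus)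
  moreover have "(neg_part f has_derivative (\<lambda>h. - G y \<bullet> h)) (at y)" if "y \<in> U" for y
  proof -
    have "((\<lambda>y. - f y) has_derivative (\<lambda>h. - G y \<bullet> h)) (at y)"
      using has_derivative_minus[OF G(2)[rule_format, OF that]] by simp
    then show ?thesis
      by (rule has_derivative_transform_within_open[OF _ \<open>open U\<close> that]) (simp add: neg neg_part_def abs_of_neg)
  qed
  ultimately show ?thesis
    unfolding C1_closure_def by metis
qed

definition fb_regular :: "('a::euclidean_space \<Rightarrow> real) \<Rightarrow> 'a set \<Rightarrow> bool" where
  "fb_regular f \<Omega> \<longleftrightarrow>
     C2_on f {x\<in>\<Omega>. f x > 0} \<and> C2_on f {x\<in>\<Omega>. f x < 0} \<and>
     C1_closure f {x\<in>\<Omega>. f x > 0} \<and> C1_closure f {x\<in>\<Omega>. f x < 0}"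

lemma fb_regular_tendsto_side_derivs:
  fixes f :: "'a::euclidean_space \<Rightarrow> real"
  assumes \<Omega>: "open \<Omega>" "x \<in> \<Omega>" and reg: "fb_regular f \<Omega>"
    and f0: "f x = 0" and \<nu>: "fb_normal f x \<nu>"
  shows "((\<lambda>t. pos_part f (x + t *\<^sub>R \<nu>) / t) \<longlongrightarrow> side_deriv (pos_part f) {y\<in>\<Omega>. f y > 0} x \<nu>) (at_right 0)"
    and "((\<lambda>t. neg_part f (x - t *\<^sub>R \<nu>) / t) \<longlongrightarrow> - side_deriv (neg_part f) {y\<in>\<Omega>. f y < 0} x \<nu>) (at_right 0)"
proof -
  obtain \<delta> where "\<delta> > 0" and \<delta>: "\<And>s. 0 < s \<Longrightarrow> s < \<delta> \<Longrightarrow> f (x + s *\<^sub>R \<nu>) > 0 \<and> f (x - s *\<^sub>R \<nu>) < 0"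
    using fb_normal_rays[OF \<nu>] by blast
  obtain r where "r > 0" "ball x r \<subseteq> \<Omega>"
    using \<Omega> open_contains_ball by blast
  moreover have "norm \<nu> = 1"
    using \<nu> by (simp add: fb_normal_def)
  ultimately have in_\<Omega>: "x + s *\<^sub>R \<nu> \<in> \<Omega>" "x - s *\<^sub>R \<nu> \<in> \<Omega>" if "0 < s" "s < r" for s
    using that by (auto simp: dist_norm)
  define \<rho> where "\<rho> = min \<delta> r"
  have "\<rho> > 0" using \<open>\<delta> > 0\<close> \<open>r > 0\<close> by (simp add: \<rho>_def)
  have "open {y\<in>\<Omega>. f y > 0}" "open {y\<in>\<Omega>. f y < 0}"
    using reg by (simp_all add: fb_regular_def C2_on_def)
  then have C1: "C1_closure (pos_part f) {y\<in>\<Omega>. f y > 0}" "C1_closure (neg_part f) {y\<in>\<Omega>. f y < 0}"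
    by (intro C1_closure_pos_part C1_closure_neg_part; use reg in \<open>simp add: fb_regular_def\<close>)+
  have parts0: "pos_part f x = 0" "neg_part f x = 0"
    using f0 by (simp_all add: pos_part_def neg_part_def)
  have ray_pos: "x + s *\<^sub>R \<nu> \<in> {y\<in>\<Omega>. f y > 0}" if "0 < s" "s < \<rho>" for s
    using in_\<Omega> \<delta> that by (simp add: \<rho>_def)
  have ray_neg: "x + s *\<^sub>R - \<nu> \<in> {y\<in>\<Omega>. f y < 0}" if "0 < s" "s < \<rho>" for s
    using in_\<Omega> \<delta> that by (simp add: \<rho>_def)
  show "((\<lambda>t. pos_part f (x + t *\<^sub>R \<nu>) / t) \<longlongrightarrow> side_deriv (pos_part f) {y\<in>\<Omega>. f y > 0} x \<nu>) (at_right 0)"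
    by (rule tendsto_side_deriv(1)[OF C1(1) parts0(1) \<open>\<rho> > 0\<close> ray_pos])
  show "((\<lambda>t. neg_part f (x - t *\<^sub>R \<nu>) / t) \<longlongrightarrow> - side_deriv (neg_part f) {y\<in>\<Omega>. f y < 0} x \<nu>) (at_right 0)"
    using tendsto_side_deriv[OF C1(2) parts0(2) \<open>\<rho> > 0\<close> ray_neg] by simp
qed

lemma fb_regular_side_derivs_mono:
  fixes f1 f2 :: "'a::euclidean_space \<Rightarrow> real"
  assumes \<Omega>: "open \<Omega>" "x \<in> \<Omega>" and reg: "fb_regular f1 \<Omega>" "fb_regular f2 \<Omega>"
    and le: "\<And>y. y \<in> \<Omega> \<Longrightarrow> f1 y \<le> f2 y" and zero: "f1 x = 0" "f2 x = 0"
    and \<nu>: "fb_normal f1 x \<nu>" "fb_normal f2 x \<nu>"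
  shows "side_deriv (pos_part f1) {y\<in>\<Omega>. f1 y > 0} x \<nu> \<le> side_deriv (pos_part f2) {y\<in>\<Omega>. f2 y > 0} x \<nu>"
    and "side_deriv (neg_part f1) {y\<in>\<Omega>. f1 y < 0} x \<nu> \<le> side_deriv (neg_part f2) {y\<in>\<Omega>. f2 y < 0} x \<nu>"
proof -
  obtain r where "r > 0" "ball x r \<subseteq> \<Omega>"
    using \<Omega> open_contains_ball by blast
  moreover have "norm \<nu> = 1"
    using \<nu>(1) by (simp add: fb_normal_def)
  ultimately have "\<forall>\<^sub>F t in at_right 0. 0 < t \<and> x + t *\<^sub>R \<nu> \<in> \<Omega> \<and> x - t *\<^sub>R \<nu> \<in> \<Omega>"
    unfolding eventually_at_right_field by (intro exI[of _ r]) (auto simp: dist_norm)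
  moreover have "pos_part f1 y \<le> pos_part f2 y" "neg_part f2 y \<le> neg_part f1 y" if "y \<in> \<Omega>" for y
    using le[OF that] by (auto simp: pos_part_def neg_part_def)
  ultimately have ev_pos: "\<forall>\<^sub>F t in at_right 0. pos_part f1 (x + t *\<^sub>R \<nu>) / t \<le> pos_part f2 (x + t *\<^sub>R \<nu>) / t"
    and ev_neg: "\<forall>\<^sub>F t in at_right 0. neg_part f2 (x - t *\<^sub>R \<nu>) / t \<le> neg_part f1 (x - t *\<^sub>R \<nu>) / t"
    by (auto elim!: eventually_mono simp: divide_right_mono)
  note lim1 = fb_regular_tendsto_side_derivs[OF \<Omega> reg(1) zero(1) \<nu>(1)]
  note lim2 = fb_regular_tendsto_side_derivs[OF \<Omega> reg(2) zero(2) \<nu>(2)]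
  show "side_deriv (pos_part f1) {y\<in>\<Omega>. f1 y > 0} x \<nu> \<le> side_deriv (pos_part f2) {y\<in>\<Omega>. f2 y > 0} x \<nu>"
    by (rule tendsto_le[OF trivial_limit_at_right_real lim2(1) lim1(1) ev_pos])
  show "side_deriv (neg_part f1) {y\<in>\<Omega>. f1 y < 0} x \<nu> \<le> side_deriv (neg_part f2) {y\<in>\<Omega>. f2 y < 0} x \<nu>"
    using tendsto_le[OF trivial_limit_at_right_real lim1(2) lim2(2) ev_neg] by simp
qed

lemma fb_regular_laplacian_mono:
  fixes f1 f2 :: "'a::euclidean_space \<Rightarrow> real"
  assumes x: "x \<in> \<Omega>" and reg: "fb_regular f1 \<Omega>" "fb_regular f2 \<Omega>"
    and le: "\<And>y. y \<in> \<Omega> \<Longrightarrow> f1 y \<le> f2 y" and eq: "f1 x = f2 x" and nonzero: "f1 x \<noteq> 0"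
  shows "laplacian f1 x \<le> laplacian f2 x"
proof (cases "f1 x > 0")
  case True
  then show ?thesis
    using reg x eq le by (intro laplacian_mono_at_touching[of f1 "{y\<in>\<Omega>. f1 y > 0}" f2 "{y\<in>\<Omega>. f2 y > 0}"])
      (simp_all add: fb_regular_def)
next
  case False
  then have "f1 x < 0" using nonzero by simp
  then show ?thesis
    using reg x eq le by (intro laplacian_mono_at_touching[of f1 "{y\<in>\<Omega>. f1 y < 0}" f2 "{y\<in>\<Omega>. f2 y < 0}"])
      (simp_all add: fb_regular_def)
qed

lemma fb_solution_imp_fb_regular: "fb_solution g \<Omega> w \<Longrightarrow> fb_regular w \<Omega>"
  by (simp add: fb_solution_def fb_regular_def)

lemma strict_subsolution_imp_fb_regular: "strict_subsolution g \<Omega> z \<Longrightarrow> fb_regular z \<Omega>"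
  by (simp add: strict_subsolution_def fb_regular_def)

lemma strict_supersolution_imp_fb_regular: "strict_supersolution g \<Omega> z \<Longrightarrow> fb_regular z \<Omega>"
  by (simp add: strict_supersolution_def fb_regular_def)

lemma strict_subsolution_less_solution:
  fixes \<Omega> :: "'a::euclidean_space set" and g w z :: "'a \<Rightarrow> real"
  assumes \<Omega>: "open \<Omega>" and g: "\<And>x. g x > 0"
    and w: "fb_solution g \<Omega> w" and z: "strict_subsolution g \<Omega> z"
    and le: "\<And>y. y \<in> \<Omega> \<Longrightarrow> z y \<le> w y" and x: "x \<in> \<Omega>"
  shows "z x < w x"
proof (rule ccontr)
  assume "\<not> z x < w x"
  with le[OF x] have eq: "z x = w x" by simp
  note reg = strict_subsolution_imp_fb_regular[OF z] fb_solution_imp_fb_regular[OF w]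
  show False
  proof (cases "z x = 0")
    case False
    have "laplacian z x \<le> laplacian w x"
      by (rule fb_regular_laplacian_mono[OF x reg le eq False])
    moreover have "laplacian w x = 0" "laplacian z x > 0"
      using w z x False eq unfolding fb_solution_def strict_subsolution_def by simp_all
    ultimately show False by simp
  next
    case True
    have "w x = 0" using True eq by simp
    have "\<exists>\<nu>. fb_normal w x \<nu>" "\<exists>\<mu>. fb_normal z x \<mu>"
      using w z x True \<open>w x = 0\<close> by (simp_all add: fb_solution_def strict_subsolution_def)
    then obtain \<nu> \<mu> where \<nu>: "fb_normal w x \<nu>" and \<mu>: "fb_normal z x \<mu>" by blast
    obtain r where "r > 0" "ball x r \<subseteq> \<Omega>"
      using \<Omega> x open_contains_ball by blast
    then have "\<mu> = \<nu>"
      using fb_normal_unique_of_le[OF \<mu> \<nu>] le by blast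
    with \<mu> have \<nu>_z: "fb_normal z x \<nu>" by simp
    have sol: "g x * side_deriv (pos_part w) {y\<in>\<Omega>. w y > 0} x \<nu> = - side_deriv (neg_part w) {y\<in>\<Omega>. w y < 0} x \<nu>"
      using w x \<open>w x = 0\<close> \<nu> by (simp add: fb_solution_def)
    have sub: "g x * side_deriv (pos_part z) {y\<in>\<Omega>. z y > 0} x \<nu> + side_deriv (neg_part z) {y\<in>\<Omega>. z y < 0} x \<nu> > 0"
      using z x True \<nu>_z by (simp add: strict_subsolution_def)
    have mono: "side_deriv (pos_part z) {y\<in>\<Omega>. z y > 0} x \<nu> \<le> side_deriv (pos_part w) {y\<in>\<Omega>. w y > 0} x \<nu>"
      "side_deriv (neg_part z) {y\<in>\<Omega>. z y < 0} x \<nu> \<le> side_deriv (neg_part w) {y\<in>\<Omega>. w y < 0} x \<nu>"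
      using fb_regular_side_derivs_mono[OF \<Omega> x reg le True \<open>w x = 0\<close> \<nu>_z \<nu>] by simp_all
    show False
      using sol sub mono mult_left_mono[OF mono(1) less_imp_le[OF g[of x]]] by linarith
  qed
qed

lemma solution_less_strict_supersolution:
  fixes \<Omega> :: "'a::euclidean_space set" and g w z :: "'a \<Rightarrow> real"
  assumes \<Omega>: "open \<Omega>" and g: "\<And>x. g x > 0"
    and w: "fb_solution g \<Omega> w" and z: "strict_supersolution g \<Omega> z"
    and le: "\<And>y. y \<in> \<Omega> \<Longrightarrow> w y \<le> z y" and x: "x \<in> \<Omega>"
  shows "w x < z x"
proof (rule ccontr)
  assume "\<not> w x < z x"
  with le[OF x] have eq: "w x = z x" by simp
  note reg = fb_solution_imp_fb_regular[OF w] strict_supersolution_imp_fb_regular[OF z]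
  show False
  proof (cases "w x = 0")
    case False
    have "laplacian w x \<le> laplacian z x"
      by (rule fb_regular_laplacian_mono[OF x reg le eq False])
    moreover have "laplacian w x = 0" "laplacian z x < 0"
      using w z x False eq unfolding fb_solution_def strict_supersolution_def by simp_all
    ultimately show False by simp
  next
    case True
    have "z x = 0" using True eq by simp
    have "\<exists>\<nu>. fb_normal w x \<nu>" "\<exists>\<mu>. fb_normal z x \<mu>"
      using w z x True \<open>z x = 0\<close> by (simp_all add: fb_solution_def strict_supersolution_def)
    then obtain \<nu> \<mu> where \<nu>: "fb_normal w x \<nu>" and \<mu>: "fb_normal z x \<mu>" by blast
    obtain r where "r > 0" "ball x r \<subseteq> \<Omega>"
      using \<Omega> x open_contains_ball by blast
    then have "\<nu> = \<mu>"
      using fb_normal_unique_of_le[OF \<nu> \<mu>] le by blast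
    with \<mu> have \<nu>_z: "fb_normal z x \<nu>" by simp
    have sol: "g x * side_deriv (pos_part w) {y\<in>\<Omega>. w y > 0} x \<nu> = - side_deriv (neg_part w) {y\<in>\<Omega>. w y < 0} x \<nu>"
      using w x True \<nu> by (simp add: fb_solution_def)
    have sup: "g x * side_deriv (pos_part z) {y\<in>\<Omega>. z y > 0} x \<nu> + side_deriv (neg_part z) {y\<in>\<Omega>. z y < 0} x \<nu> < 0"
      using z x \<open>z x = 0\<close> \<nu>_z by (simp add: strict_supersolution_def)
    have mono: "side_deriv (pos_part w) {y\<in>\<Omega>. w y > 0} x \<nu> \<le> side_deriv (pos_part z) {y\<in>\<Omega>. z y > 0} x \<nu>"
      "side_deriv (neg_part w) {y\<in>\<Omega>. w y < 0} x \<nu> \<le> side_deriv (neg_part z) {y\<in>\<Omega>. z y < 0} x \<nu>"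
      using fb_regular_side_derivs_mono[OF \<Omega> x reg le True \<open>z x = 0\<close> \<nu> \<nu>_z] by simp_all
    show False
      using sol sup mono mult_left_mono[OF mono(1) less_imp_le[OF g[of x]]] by linarith
  qed
qed

theorem lemma7p7:
  fixes \<Omega> :: "'a::euclidean_space set" and g w z :: "'a \<Rightarrow> real"
  assumes "open \<Omega>"
    and "\<And>x. g x > 0"
    and "fb_solution g \<Omega> w"
    and "continuous_on (closure \<Omega>) w"
    and "continuous_on (closure \<Omega>) z"
  shows "(strict_subsolution g \<Omega> z \<and> (\<forall>x\<in>closure \<Omega>. w x \<ge> z x) \<longrightarrow> (\<forall>x\<in>\<Omega>. w x > z x))
       \<and> (strict_supersolution g \<Omega> z \<and> (\<forall>x\<in>closure \<Omega>. w x \<le> z x) \<longrightarrow> (\<forall>x\<in>\<Omega>. w x < z x))"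
  using strict_subsolution_less_solution[OF assms(1-3)] solution_less_strict_supersolution[OF assms(1-3)]
    closure_subset by blast

end
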